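(* Let $p>2$ be a prime and let $a,b\in\mathbb{C}_p$ with $a\neq0$, $b\neq0$, $a\neq b$, $|2a|_p=|b|_p$ and $|2a-b|_p<|a|_p$. Let $P=-\frac1b$, $D=\mathbb{C}_p\setminus\{P\}$, $f(x)=\frac{ax^2}{bx+1}$ on $D$, $x_1=0$, $x_2=\frac1{a-b}$, and $r_0=\frac{1}{|b|_p}$. Then $x_1$ and $x_2$ are attracting fixed points of $f$, and $$A(x_1)=B_{r_0}(x_1),\qquad A(x_2)=B_{r_0}(x_2).$$
   Context: $\mathbb{C}_p$ is the field of complex $p$-adic numbers with $p$-adic norm $|\cdot|_p$. For $c\in\mathbb{C}_p$, $r>0$: $B_r(c)=\{x:|x-c|_p<r\}$. For $y\in D$, $y^{(n)}=f^n(y)$ is the $n$-th iterate (defined as long as no earlier iterate equals $P$). A fixed point $x^{(0)}$ of $f$ is attracting if $|f'(x^{(0)})|_p<1$. Its basin of attraction is $A(x^{(0)})=\{y: y^{(n)}\text{ defined for all }n,\ y^{(n)}\to x^{(0)}\}$. *)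

theory Defs
  imports Complex_Main "HOL-Computational_Algebra.Polynomial" "HOL-Computational_Algebra.Primes"
begin

text \<open>We characterise C_p
  (up to isometric isomorphism) as a field with an absolute value that is
  non-archimedean, extends the p-adic absolute value (normalised by |p| = 1/p),
  is complete, algebraically closed, and in which the algebraic numbers
  (roots of nonzero integer polynomials) are dense.\<close>

definition is_abs_value :: "('a::field \<Rightarrow> real) \<Rightarrow> bool" where
  "is_abs_value N \<longleftrightarrow>
     (\<forall>x. N x \<ge> 0) \<and> (\<forall>x. N x = 0 \<longleftrightarrow> x = 0) \<and>
     (\<forall>x y. N (x * y) = N x * N y) \<and>
     (\<forall>x y. N (x + y) \<le> max (N x) (N y))"

definition abs_complete :: "('a::field \<Rightarrow> real) \<Rightarrow> bool" where
  "abs_complete N \<longleftrightarrow>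
     (\<forall>s::nat \<Rightarrow> 'a. (\<forall>e>0. \<exists>M. \<forall>m\<ge>M. \<forall>n\<ge>M. N (s m - s n) < e)
        \<longrightarrow> (\<exists>l. (\<lambda>n. N (s n - l)) \<longlonglongrightarrow> 0))"

definition alg_closed_field :: "'a::field itself \<Rightarrow> bool" where
  "alg_closed_field _ \<longleftrightarrow> (\<forall>q::'a poly. degree q > 0 \<longrightarrow> (\<exists>x. poly q x = 0))"

definition algebraic_over_Q :: "'a::field_char_0 \<Rightarrow> bool" where
  "algebraic_over_Q x \<longleftrightarrow> (\<exists>q::int poly. q \<noteq> 0 \<and> poly (map_poly of_int q) x = 0)"

definition is_Cp :: "nat \<Rightarrow> ('a::field_char_0 \<Rightarrow> real) \<Rightarrow> bool" where
  "is_Cp p N \<longleftrightarrow> prime p \<and> is_abs_value N \<and> N (of_nat p) = 1 / real p \<and>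
     abs_complete N \<and> alg_closed_field TYPE('a) \<and>
     (\<forall>x. \<forall>e>0. \<exists>y. algebraic_over_Q y \<and> N (x - y) < e)"

definition pball :: "('a::field \<Rightarrow> real) \<Rightarrow> 'a \<Rightarrow> real \<Rightarrow> 'a set" where
  "pball N c r = {x. N (x - c) < r}"

definition has_pderiv :: "('a::field \<Rightarrow> real) \<Rightarrow> 'a set \<Rightarrow> ('a \<Rightarrow> 'a) \<Rightarrow> 'a \<Rightarrow> 'a \<Rightarrow> bool" where
  "has_pderiv N D f x d \<longleftrightarrow> x \<in> D \<and>
     (\<forall>e>0. \<exists>\<delta>>0. \<forall>y\<in>D. 0 < N (y - x) \<and> N (y - x) < \<delta> \<longrightarrow>
        N ((f y - f x) / (y - x) - d) < e)"

definition attracting_fixed_point ::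
  "('a::field \<Rightarrow> real) \<Rightarrow> 'a set \<Rightarrow> ('a \<Rightarrow> 'a) \<Rightarrow> 'a \<Rightarrow> bool" where
  "attracting_fixed_point N D f x0 \<longleftrightarrow> x0 \<in> D \<and> f x0 = x0 \<and>
     (\<exists>d. has_pderiv N D f x0 d \<and> N d < 1)"

definition basin :: "('a::field \<Rightarrow> real) \<Rightarrow> 'a set \<Rightarrow> ('a \<Rightarrow> 'a) \<Rightarrow> 'a \<Rightarrow> 'a set" where
  "basin N D f x0 = {y. (\<forall>n. (f ^^ n) y \<in> D) \<and> (\<lambda>n. N ((f ^^ n) y - x0)) \<longlonglongrightarrow> 0}"

end

theory Submission
  imports Defs
begin

text \<open>Since p is odd, |2| = 1, so |a| = |b| = |a - b| =: R and r0 = 1/R.  Near either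
  fixed point the denominator bx + 1 has absolute value 1, and the factorisations
  f x = x (ax)/(bx + 1) and f x - x2 = (x - x2)(ax + 1)/(bx + 1), with
  ax + 1 = a(x - x2) + (2a - b) x2, show that f contracts the open r0-ball about x1
  (by the factor R|x|) and about x2 (by the factor max (|2a - b|/R) (R|x - x2|)).
  Outside these balls the same factorisations have numerator at least as large as the
  denominator, so f never brings a point closer to the fixed point, and such a point
  cannot be attracted to it.\<close>

locale nonarch_abs =
  fixes N :: "'a::field \<Rightarrow> real"
  assumes is_abs_value: "is_abs_value N"
begin

lemma N_nonneg: "0 \<le> N x"
  using is_abs_value unfolding is_abs_value_def by blast

lemma N_eq_0_iff [simp]: "N x = 0 \<longleftrightarrow> x = 0"
  using is_abs_value unfolding is_abs_value_def by blast

lemma N_0 [simp]: "N 0 = 0"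
  by simp

lemma N_pos_iff [simp]: "0 < N x \<longleftrightarrow> x \<noteq> 0"
  using N_nonneg[of x] N_eq_0_iff[of x] by linarith

lemma N_mult [simp]: "N (x * y) = N x * N y"
  using is_abs_value unfolding is_abs_value_def by blast

lemma N_add_le_max: "N (x + y) \<le> max (N x) (N y)"
  using is_abs_value unfolding is_abs_value_def by blast

lemma N_1 [simp]: "N 1 = 1"
  using N_mult[of 1 1] N_eq_0_iff[of 1] by (metis mult_cancel_right1 one_neq_zero)

lemma N_minus [simp]: "N (- x) = N x"
proof -
  have "(N (- 1) - 1) * (N (- 1) + 1) = 0"
    using N_mult[of "- 1" "- 1"] by (simp add: algebra_simps)
  then have "N (- 1) = 1"
    using N_nonneg[of "- 1"] by simp
  then show ?thesis
    using N_mult[of "- 1" x] by simp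
qed

lemma N_diff_le_max: "N (x - y) \<le> max (N x) (N y)"
  using N_add_le_max[of x "- y"] by simp

lemma N_divide [simp]: "N (x / y) = N x / N y"
proof (cases "y = 0")
  case False
  then have "N (x / y) * N y = N x"
    using N_mult[of "x / y" y] by simp
  with False show ?thesis
    by (simp add: field_simps)
qed simp

lemma N_power [simp]: "N (x ^ n) = N x ^ n"
  by (induction n) simp_all

lemma N_add_eq_right:
  assumes "N x < N y"
  shows "N (x + y) = N y"
proof -
  have "N (x + y) \<le> N y"
    using N_add_le_max[of x y] assms by simp
  moreover have "N y \<le> max (N (x + y)) (N x)"
    using N_diff_le_max[of "x + y" x] by simp
  ultimately show ?thesis
    using assms by linarith
qed

lemma N_add_eq_left: "N y < N x \<Longrightarrow> N (x + y) = N x"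
  using N_add_eq_right[of y x] by (simp add: add.commute)

lemma N_of_nat_le_1: "N (of_nat n) \<le> 1"
proof (induction n)
  case (Suc n)
  then show ?case
    using N_add_le_max[of 1 "of_nat n"] by simp
qed simp

lemma N_2_eq_1:
  assumes "odd p" and "N (of_nat p) < 1"
  shows "N 2 = 1"
proof (rule ccontr)
  assume "N 2 \<noteq> 1"
  with N_of_nat_le_1[of 2] have N2: "N 2 < 1"
    by simp
  obtain m where p: "p = 2 * m + 1"
    using \<open>odd p\<close> oddE by blast
  have "N (2 * of_nat m) < 1"
    using mult_left_le[of "N (of_nat m)" "N 2"] N_of_nat_le_1[of m] N_nonneg[of 2] N2 by simp
  then have "N (of_nat p - 2 * of_nat m) < 1"
    using N_diff_le_max[of "of_nat p" "2 * of_nat m"] assms(2) by linarith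
  then show False
    using p by simp
qed

lemma has_pderiv_if_remainder_le:
  assumes "x \<in> D" and "0 < \<delta>"
    and remainder: "\<And>y. y \<in> D \<Longrightarrow> 0 < N (y - x) \<Longrightarrow> N (y - x) < \<delta> \<Longrightarrow>
      N ((f y - f x) / (y - x) - d) \<le> C * N (y - x)"
  shows "has_pderiv N D f x d"
  unfolding has_pderiv_def
proof (intro conjI allI impI)
  fix e :: real
  assume "0 < e"
  show "\<exists>\<delta>'>0. \<forall>y\<in>D. 0 < N (y - x) \<and> N (y - x) < \<delta>' \<longrightarrow>
      N ((f y - f x) / (y - x) - d) < e"
  proof (intro exI conjI ballI impI)
    show "0 < min \<delta> (e / (\<bar>C\<bar> + 1))"
      using \<open>0 < \<delta>\<close> \<open>0 < e\<close> by simp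
    fix y
    assume "y \<in> D" and y: "0 < N (y - x) \<and> N (y - x) < min \<delta> (e / (\<bar>C\<bar> + 1))"
    then have "N ((f y - f x) / (y - x) - d) \<le> C * N (y - x)"
      using remainder by simp
    also have "\<dots> \<le> (\<bar>C\<bar> + 1) * N (y - x)"
      using y by (intro mult_right_mono) (auto simp: N_nonneg)
    also have "\<dots> < e"
      using y by (simp add: field_simps add_pos_nonneg)
    finally show "N ((f y - f x) / (y - x) - d) < e" .
  qed
qed (use assms in simp)

lemma in_basin_if_contracting:
  assumes "0 \<le> q" and "q < 1"
    and contracting: "\<And>x. N (x - x0) \<le> N (y - x0) \<Longrightarrow> x \<in> D \<and> N (f x - x0) \<le> q * N (x - x0)"
  shows "y \<in> basin N D f x0"
proof -
  have shrink: "q ^ n * N (y - x0) \<le> N (y - x0)" for n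
    using \<open>0 \<le> q\<close> \<open>q < 1\<close> by (intro mult_left_le_one_le N_nonneg zero_le_power power_le_one) simp_all
  have bound: "N ((f ^^ n) y - x0) \<le> q ^ n * N (y - x0)" for n
  proof (induction n)
    case (Suc n)
    have "N ((f ^^ n) y - x0) \<le> N (y - x0)"
      using Suc.IH shrink by (rule order_trans)
    then have "N (f ((f ^^ n) y) - x0) \<le> q * N ((f ^^ n) y - x0)"
      using contracting by blast
    also have "\<dots> \<le> q ^ Suc n * N (y - x0)"
      using mult_left_mono[OF Suc.IH \<open>0 \<le> q\<close>] by (simp add: mult.assoc)
    finally show ?case
      by simp
  qed simp
  have "(f ^^ n) y \<in> D" for n
    using contracting[OF order_trans[OF bound shrink]] by blast
  moreover have "(\<lambda>n. N ((f ^^ n) y - x0)) \<longlonglongrightarrow> 0"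
  proof (rule tendsto_sandwich[of "\<lambda>_. 0" _ _ "\<lambda>n. q ^ n * N (y - x0)"])
    show "(\<lambda>n. q ^ n * N (y - x0)) \<longlonglongrightarrow> 0"
      using LIMSEQ_power_zero[of q] assms(1,2) by (simp add: tendsto_mult_left_zero)
  qed (simp_all add: N_nonneg bound)
  ultimately show ?thesis
    unfolding basin_def by blast
qed

lemma not_in_basin_if_expanding:
  assumes "0 < r" and "r \<le> N (y - x0)"
    and expanding: "\<And>x. x \<in> D \<Longrightarrow> r \<le> N (x - x0) \<Longrightarrow> N (x - x0) \<le> N (f x - x0)"
  shows "y \<notin> basin N D f x0"
proof
  assume "y \<in> basin N D f x0"
  then have in_D: "\<forall>n. (f ^^ n) y \<in> D"
    and tendsto_0: "(\<lambda>n. N ((f ^^ n) y - x0)) \<longlonglongrightarrow> 0"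
    unfolding basin_def by auto
  have "r \<le> N ((f ^^ n) y - x0)" for n
  proof (induction n)
    case (Suc n)
    also have "N ((f ^^ n) y - x0) \<le> N (f ((f ^^ n) y) - x0)"
      using expanding in_D Suc.IH by blast
    finally show ?case
      by simp
  qed (use assms in simp)
  then have "r \<le> 0"
    using LIMSEQ_le_const[OF tendsto_0] by blast
  with \<open>0 < r\<close> show False
    by simp
qed

lemma basin_eq_pball:
  assumes "0 < r"
    and contracting: "\<And>y. N (y - x0) < r \<Longrightarrow> \<exists>q. 0 \<le> q \<and> q < 1 \<and>
      (\<forall>x. N (x - x0) \<le> N (y - x0) \<longrightarrow> x \<in> D \<and> N (f x - x0) \<le> q * N (x - x0))"
    and expanding: "\<And>x. x \<in> D \<Longrightarrow> r \<le> N (x - x0) \<Longrightarrow> N (x - x0) \<le> N (f x - x0)"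
  shows "basin N D f x0 = pball N x0 r"
proof (intro set_eqI iffI)
  fix y
  assume "y \<in> basin N D f x0"
  then show "y \<in> pball N x0 r"
    using not_in_basin_if_expanding[OF \<open>0 < r\<close> _ expanding] unfolding pball_def by force
next
  fix y
  assume "y \<in> pball N x0 r"
  then obtain q where "0 \<le> q" "q < 1"
    and "\<And>x. N (x - x0) \<le> N (y - x0) \<Longrightarrow> x \<in> D \<and> N (f x - x0) \<le> q * N (x - x0)"
    using contracting unfolding pball_def by blast
  then show "y \<in> basin N D f x0"
    by (rule in_basin_if_contracting)
qed

end

definition qmap :: "'a::field \<Rightarrow> 'a \<Rightarrow> 'a \<Rightarrow> 'a" where
  "qmap a b x = a * x ^ 2 / (b * x + 1)"

locale quadratic_map = nonarch_abs N for N :: "'a::field \<Rightarrow> real" +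
  fixes a b :: 'a
  assumes a_nonzero: "a \<noteq> 0"
    and N_b: "N b = N a"
    and N_2a_minus_b_less: "N (2 * a - b) < N a"
begin

abbreviation "f \<equiv> qmap a b"
abbreviation "D \<equiv> UNIV - {- 1 / b}"
abbreviation "x2 \<equiv> 1 / (a - b)"
abbreviation "r0 \<equiv> 1 / N b"

lemma N_a_pos: "0 < N a"
  using a_nonzero by simp

lemma b_nonzero: "b \<noteq> 0"
  using N_b a_nonzero by force

lemma N_a_minus_b: "N (a - b) = N a"
  using N_add_eq_right[of "2 * a - b" "- a"] N_2a_minus_b_less by simp

lemma a_neq_b: "a \<noteq> b"
  using N_a_minus_b a_nonzero by force

lemma mem_D_iff: "x \<in> D \<longleftrightarrow> b * x + 1 \<noteq> 0"
  using b_nonzero by (auto simp: field_simps eq_neg_iff_add_eq_0)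

lemma qmap_0: "f 0 = 0"
  by (simp add: qmap_def)

lemma denominator_at_x2: "b * x2 + 1 = a * x2"
  using a_neq_b by (simp add: field_simps)

lemma qmap_x2: "f x2 = x2"
  using denominator_at_x2 a_nonzero a_neq_b by (simp add: qmap_def power2_eq_square)

lemma x2_in_D: "x2 \<in> D"
  using denominator_at_x2 a_nonzero a_neq_b mem_D_iff by simp

lemma x2_inverse: "(a - b) * x2 = 1"
  using a_neq_b by simp

lemma numerator_decomp: "a * x + 1 = a * (x - x2) + (2 * a - b) * x2"
  using x2_inverse by algebra

lemma denominator_decomp: "b * x + 1 = b * (x - x2) + a * x2"
  using x2_inverse by algebra

lemma qmap_minus_x2:
  assumes "b * x + 1 \<noteq> 0"
  shows "f x - x2 = (x - x2) * (a * x + 1) / (b * x + 1)"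
  using assms a_neq_b by (simp add: qmap_def field_simps power2_eq_square)

lemma N_a_x2: "N (a * x2) = 1"
  using N_a_minus_b a_nonzero by simp

lemma N_2a_minus_b_x2_less: "N ((2 * a - b) * x2) < 1"
  using N_a_minus_b N_2a_minus_b_less N_a_pos by simp

lemma le_r0_iff: "r0 \<le> t \<longleftrightarrow> 1 \<le> N a * t"
  using N_a_pos N_b by (simp add: divide_le_eq mult.commute)

lemma less_r0_iff: "t < r0 \<longleftrightarrow> N a * t < 1"
  using le_r0_iff[of t] by linarith

lemma N_denominator_near_0:
  assumes "N x < r0"
  shows "N (b * x + 1) = 1"
  using N_add_eq_right[of "b * x" 1] assms N_b less_r0_iff by simp

lemma N_denominator_near_x2:
  assumes "N (x - x2) < r0"
  shows "N (b * x + 1) = 1"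
proof -
  have smaller: "N (b * (x - x2)) < N (a * x2)"
    unfolding N_a_x2 using assms N_b less_r0_iff by simp
  show ?thesis
    unfolding denominator_decomp N_add_eq_right[OF smaller] by (rule N_a_x2)
qed

lemma N_qmap_near_0:
  assumes "N x < r0"
  shows "N (f x) = N a * N x ^ 2"
  using N_denominator_near_0[OF assms] by (simp add: qmap_def)

lemma N_qmap_minus_x2_near:
  assumes "N (x - x2) < r0"
  shows "N (f x - x2) \<le> max (N (2 * a - b) / N a) (N a * N (x - x2)) * N (x - x2)"
proof -
  have den: "N (b * x + 1) = 1"
    using N_denominator_near_x2[OF assms] .
  have "N (a * x + 1) \<le> max (N (a * (x - x2))) (N ((2 * a - b) * x2))"
    unfolding numerator_decomp by (rule N_add_le_max)
  also have "\<dots> = max (N (2 * a - b) / N a) (N a * N (x - x2))"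
    by (simp add: N_a_minus_b max.commute)
  finally have num: "N (a * x + 1) \<le> max (N (2 * a - b) / N a) (N a * N (x - x2))" .
  have "N (f x - x2) = N (x - x2) * N (a * x + 1)"
    using qmap_minus_x2[of x] den by force
  also have "\<dots> \<le> N (x - x2) * max (N (2 * a - b) / N a) (N a * N (x - x2))"
    by (rule mult_left_mono[OF num N_nonneg])
  finally show ?thesis
    by (simp add: mult.commute)
qed

lemma N_qmap_far_from_0:
  assumes "x \<in> D" and "r0 \<le> N x"
  shows "N x \<le> N (f x)"
proof -
  have far: "1 \<le> N a * N x"
    using assms(2) le_r0_iff by simp
  have "N (b * x + 1) \<le> max (N (b * x)) (N 1)"
    by (rule N_add_le_max)
  also have "\<dots> = N a * N x"
    using far N_b by simp
  finally have "1 \<le> N a * N x / N (b * x + 1)"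
    using assms(1) mem_D_iff by simp
  moreover have "N (f x) = N x * (N a * N x / N (b * x + 1))"
    by (simp add: qmap_def power2_eq_square)
  ultimately have "N x * 1 \<le> N (f x)"
    using mult_left_mono N_nonneg by metis
  then show ?thesis
    by simp
qed

lemma N_qmap_minus_x2_far:
  assumes "x \<in> D" and "r0 \<le> N (x - x2)"
  shows "N (x - x2) \<le> N (f x - x2)"
proof -
  have far: "1 \<le> N a * N (x - x2)"
    using assms(2) le_r0_iff by simp
  then have larger: "N ((2 * a - b) * x2) < N (a * (x - x2))"
    using N_2a_minus_b_x2_less by simp
  have "N (b * x + 1) \<le> max (N (b * (x - x2))) (N (a * x2))"
    unfolding denominator_decomp by (rule N_add_le_max)
  also have "\<dots> = N a * N (x - x2)"
    unfolding N_a_x2 using far N_b by simp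
  also have "\<dots> = N (a * x + 1)"
    unfolding numerator_decomp N_add_eq_left[OF larger] by simp
  finally have "1 \<le> N (a * x + 1) / N (b * x + 1)"
    using assms(1) mem_D_iff by simp
  moreover have "N (f x - x2) = N (x - x2) * (N (a * x + 1) / N (b * x + 1))"
    using qmap_minus_x2[of x] assms(1) mem_D_iff by simp
  ultimately have "N (x - x2) * 1 \<le> N (f x - x2)"
    using mult_left_mono N_nonneg by metis
  then show ?thesis
    by simp
qed

lemma qmap_diff_quotient_x2:
  assumes "b * y + 1 \<noteq> 0" and "y \<noteq> x2"
  shows "(f y - f x2) / (y - x2) - (2 * a - b) / a = (a - b) ^ 2 * (y - x2) / (a * (b * y + 1))"
proof -
  have "(f y - f x2) / (y - x2) = (a * y + 1) / (b * y + 1)"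
    using qmap_minus_x2[OF assms(1)] qmap_x2 assms(2) by simp
  moreover have "(a * y + 1) * a - (2 * a - b) * (b * y + 1) = (a - b) ^ 2 * (y - x2)"
    using x2_inverse by algebra
  ultimately show ?thesis
    by (simp add: diff_frac_eq[OF assms(1) a_nonzero] mult.commute)
qed

lemma attracting_fixed_point_0: "attracting_fixed_point N D f 0"
  unfolding attracting_fixed_point_def
proof (intro conjI exI[where x = 0])
  show "0 \<in> D"
    using mem_D_iff by simp
  show "has_pderiv N D f 0 0"
  proof (rule has_pderiv_if_remainder_le[where \<delta> = r0 and C = "N a"])
    fix y
    assume "0 < N (y - 0)" and "N (y - 0) < r0"
    then show "N ((f y - f 0) / (y - 0) - 0) \<le> N a * N (y - 0)"
      using N_qmap_near_0[of y] qmap_0 by (simp add: power2_eq_square)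
  qed (use mem_D_iff N_b N_a_pos in auto)
qed (simp_all add: qmap_0)

lemma attracting_fixed_point_x2: "attracting_fixed_point N D f x2"
  unfolding attracting_fixed_point_def
proof (intro conjI exI[where x = "(2 * a - b) / a"])
  show "has_pderiv N D f x2 ((2 * a - b) / a)"
  proof (rule has_pderiv_if_remainder_le[where \<delta> = r0 and C = "N a"])
    fix y
    assume "y \<in> D" and "0 < N (y - x2)" and near: "N (y - x2) < r0"
    then have "(f y - f x2) / (y - x2) - (2 * a - b) / a
        = (a - b) ^ 2 * (y - x2) / (a * (b * y + 1))"
      using qmap_diff_quotient_x2 mem_D_iff by simp
    then show "N ((f y - f x2) / (y - x2) - (2 * a - b) / a) \<le> N a * N (y - x2)"
      using N_denominator_near_x2[OF near] N_a_minus_b N_a_pos by (simp add: power2_eq_square)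
  qed (rule x2_in_D, use N_b N_a_pos in simp)
  show "N ((2 * a - b) / a) < 1"
    using N_2a_minus_b_less N_a_pos by simp
  show "x2 \<in> D"
    by (rule x2_in_D)
  show "f x2 = x2"
    by (rule qmap_x2)
qed

lemma basin_0: "basin N D f 0 = pball N 0 r0"
proof (rule basin_eq_pball)
  fix y
  assume "N (y - 0) < r0"
  then have q: "0 \<le> N a * N y" "N a * N y < 1"
    using less_r0_iff N_a_pos N_nonneg by simp_all
  have "x \<in> D \<and> N (f x - 0) \<le> (N a * N y) * N (x - 0)" if "N (x - 0) \<le> N (y - 0)" for x
  proof
    have "N x < r0"
      using that \<open>N (y - 0) < r0\<close> by simp
    then show "x \<in> D"
      using N_denominator_near_0 mem_D_iff by force
    have "N a * N x * N x \<le> N a * N y * N x"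
      using that N_nonneg[of a] N_nonneg[of x] by (intro mult_right_mono mult_left_mono) simp_all
    then show "N (f x - 0) \<le> (N a * N y) * N (x - 0)"
      using N_qmap_near_0[OF \<open>N x < r0\<close>] by (simp add: power2_eq_square mult.assoc)
  qed
  with q show "\<exists>q\<ge>0. q < 1 \<and> (\<forall>x. N (x - 0) \<le> N (y - 0) \<longrightarrow> x \<in> D \<and> N (f x - 0) \<le> q * N (x - 0))"
    by blast
next
  show "0 < r0"
    using N_b N_a_pos by simp
next
  fix x
  assume "x \<in> D" and "r0 \<le> N (x - 0)"
  then show "N (x - 0) \<le> N (f x - 0)"
    using N_qmap_far_from_0 by simp
qed

lemma basin_x2: "basin N D f x2 = pball N x2 r0"
proof (rule basin_eq_pball)
  fix y
  assume near: "N (y - x2) < r0"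
  define q where "q = max (N (2 * a - b) / N a) (N a * N (y - x2))"
  have "N (2 * a - b) / N a < 1" and "N a * N (y - x2) < 1"
    using N_2a_minus_b_less N_a_pos near less_r0_iff by simp_all
  moreover have "0 \<le> N (2 * a - b) / N a"
    using N_nonneg N_nonneg by (rule divide_nonneg_nonneg)
  ultimately have q: "0 \<le> q" "q < 1"
    unfolding q_def by simp_all
  have "x \<in> D \<and> N (f x - x2) \<le> q * N (x - x2)" if "N (x - x2) \<le> N (y - x2)" for x
  proof
    have "N (x - x2) < r0"
      using that near by simp
    then show "x \<in> D"
      using N_denominator_near_x2 mem_D_iff by force
    have "N (f x - x2) \<le> max (N (2 * a - b) / N a) (N a * N (x - x2)) * N (x - x2)"
      using \<open>N (x - x2) < r0\<close> by (rule N_qmap_minus_x2_near)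
    also have "\<dots> \<le> q * N (x - x2)"
      unfolding q_def using that N_nonneg[of a] N_nonneg[of "x - x2"]
      by (intro mult_right_mono max.mono order_refl mult_left_mono)
    finally show "N (f x - x2) \<le> q * N (x - x2)" .
  qed
  with q show "\<exists>q\<ge>0. q < 1 \<and> (\<forall>x. N (x - x2) \<le> N (y - x2) \<longrightarrow> x \<in> D \<and> N (f x - x2) \<le> q * N (x - x2))"
    by blast
next
  show "0 < r0"
    using N_b N_a_pos by simp
next
  fix x
  assume "x \<in> D" and "r0 \<le> N (x - x2)"
  then show "N (x - x2) \<le> N (f x - x2)"
    by (rule N_qmap_minus_x2_far)
qed

end

theorem theorem3p9:
  fixes p :: nat and N :: "'a::field_char_0 \<Rightarrow> real" and a b :: 'a
  assumes Cp: "is_Cp p N"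
    and p2: "p > 2"
    and a0: "a \<noteq> 0" and b0: "b \<noteq> 0" and ab: "a \<noteq> b"
    and h1: "N (2 * a) = N b"
    and h2: "N (2 * a - b) < N a"
  defines "P \<equiv> - 1 / b"
    and "D \<equiv> UNIV - {- 1 / b}"
    and "f \<equiv> (\<lambda>x. a * x ^ 2 / (b * x + 1))"
    and "x1 \<equiv> 0"
    and "x2 \<equiv> 1 / (a - b)"
    and "r0 \<equiv> 1 / N b"
  shows "attracting_fixed_point N D f x1 \<and> attracting_fixed_point N D f x2 \<and>
         basin N D f x1 = pball N x1 r0 \<and> basin N D f x2 = pball N x2 r0"
proof -
  interpret nonarch_abs N
    using Cp by unfold_locales (simp add: is_Cp_def)
  have "odd p" and "N (of_nat p) < 1"
    using Cp p2 prime_odd_nat by (auto simp: is_Cp_def)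
  then have "N 2 = 1"
    by (rule N_2_eq_1)
  with h1 have "N b = N a"
    by simp
  then have map: "quadratic_map N a b"
    using a0 h2 by unfold_locales
  have "f = qmap a b"
    unfolding f_def qmap_def ..
  then show ?thesis
    unfolding D_def x1_def x2_def r0_def
    using quadratic_map.attracting_fixed_point_0[OF map] quadratic_map.attracting_fixed_point_x2[OF map]
      quadratic_map.basin_0[OF map] quadratic_map.basin_x2[OF map]
    by simp
qed

end
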